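(* A metric $\tilde d_H$ on $\mathcal{K}^n\cup\{\emptyset\}$ (with values in $[0,\infty]$) is an extension of the Hausdorff metric $d_H$ satisfying $\tilde d_H(K+x,L+x)=\tilde d_H(K,L)$ for all $K,L\in\mathcal{K}^n\cup\{\emptyset\}$ and $x\in\mathbb{R}^n$ if and only if $\tilde d_H(K,L)=d_H(K,L)$ when $K\neq\emptyset\neq L$, $\tilde d_H(\emptyset,\emptyset)=0$, and $\tilde d_H(K,L)=+\infty$ when exactly one of $K,L$ is empty.
   Context: $\mathcal{K}^n$ is the set of non-empty compact convex subsets of $\mathbb{R}^n$, with Hausdorff metric $d_H$; $\emptyset+x=\emptyset$. An extension of $d_H$ is a metric $\tilde d_H:(\mathcal{K}^n\cup\{\emptyset\})\times(\mathcal{K}^n\cup\{\emptyset\})\to[0,\infty]$ with $\tilde d_H(K,L)=d_H(K,L)$ for all $K,L\in\mathcal{K}^n$. *)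

theory Defs
  imports "HOL-Analysis.Analysis" "HOL-Library.Extended_Nonnegative_Real"
begin

definition convex_bodies :: "'a::euclidean_space set set" where
  "convex_bodies = {K. K \<noteq> {} \<and> compact K \<and> convex K}"

definition hausdorff_dist :: "'a::metric_space set \<Rightarrow> 'a set \<Rightarrow> real" where
  "hausdorff_dist K L = max (SUP x\<in>K. infdist x L) (SUP y\<in>L. infdist y K)"

definition ext_metric_on :: "'b set \<Rightarrow> ('b \<Rightarrow> 'b \<Rightarrow> ennreal) \<Rightarrow> bool" where
  "ext_metric_on S d \<longleftrightarrow>
     (\<forall>x\<in>S. \<forall>y\<in>S. (d x y = 0 \<longleftrightarrow> x = y)) \<and>
     (\<forall>x\<in>S. \<forall>y\<in>S. d x y = d y x) \<and>
     (\<forall>x\<in>S. \<forall>y\<in>S. \<forall>z\<in>S. d x z \<le> d x y + d y z)"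

definition translate :: "'a::real_vector set \<Rightarrow> 'a \<Rightarrow> 'a set" where
  "translate K x = (\<lambda>y. y + x) ` K"

end

theory Submission
  imports Defs
begin

text \<open>Translation invariance forces the distance from a point \<open>{y}\<close> to \<open>{}\<close> to be a constant \<open>c\<close>.
  The triangle inequality through \<open>{}\<close> then bounds the distance of any two points by \<open>2 c\<close>;
  since the Hausdorff distance of points is unbounded, \<open>c = \<infinity>\<close>, and a further triangle inequality
  through a point spreads this to every convex body. Conversely, the Hausdorff distance is
  translation invariant and translates of convex bodies are convex bodies.\<close>

lemma ext_metric_on_zero_iff:
  "ext_metric_on S d \<Longrightarrow> x \<in> S \<Longrightarrow> y \<in> S \<Longrightarrow> d x y = 0 \<longleftrightarrow> x = y"
  by (simp add: ext_metric_on_def)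

lemma ext_metric_on_sym:
  "ext_metric_on S d \<Longrightarrow> x \<in> S \<Longrightarrow> y \<in> S \<Longrightarrow> d x y = d y x"
  by (simp add: ext_metric_on_def)

lemma ext_metric_on_triangle:
  "ext_metric_on S d \<Longrightarrow> x \<in> S \<Longrightarrow> y \<in> S \<Longrightarrow> z \<in> S \<Longrightarrow> d x z \<le> d x y + d y z"
  by (simp add: ext_metric_on_def)

lemma ext_metric_on_equidistant_unbounded:
  assumes d: "ext_metric_on S d" and e: "e \<in> S" and "A \<subseteq> S"
    and equidistant: "\<And>a. a \<in> A \<Longrightarrow> d a e = c"
    and unbounded: "\<And>r. \<exists>a\<in>A. \<exists>b\<in>A. ennreal r < d a b"
  shows "c = \<infinity>"
proof (rule ccontr)
  assume "c \<noteq> \<infinity>"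
  then obtain r where c: "c = ennreal r" "r \<ge> 0"
    by (cases c rule: ennreal_cases) auto
  obtain a b where ab: "a \<in> A" "b \<in> A" and far: "ennreal (2 * r) < d a b"
    using unbounded by blast
  with \<open>A \<subseteq> S\<close> have "a \<in> S" "b \<in> S" by auto
  have "d a b \<le> d a e + d e b"
    using ext_metric_on_triangle[OF d \<open>a \<in> S\<close> e \<open>b \<in> S\<close>] .
  also have "\<dots> = c + c"
    using ab equidistant ext_metric_on_sym[OF d e \<open>b \<in> S\<close>] by simp
  also have "\<dots> = ennreal (2 * r)"
    using c by (simp add: ennreal_plus[symmetric] del: ennreal_plus)
  finally show False using far by simp
qed

lemma ext_metric_on_infinite_dist_transfer:
  assumes d: "ext_metric_on S d" and "x \<in> S" "y \<in> S" "z \<in> S"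
    and "d x z = \<infinity>" and "d x y \<noteq> \<infinity>"
  shows "d y z = \<infinity>"
  using ext_metric_on_triangle[OF assms(1-4)] assms(5,6) by (simp add: top_unique)

lemma translate_empty [simp]: "translate {} x = {}"
  by (simp add: translate_def)

lemma translate_singleton [simp]: "translate {a} x = {a + x}"
  by (simp add: translate_def)

lemma infdist_translate:
  fixes x y :: "'a::real_normed_vector"
  shows "infdist (y + x) (translate L x) = infdist y L"
  by (simp add: translate_def infdist_def image_comp o_def dist_norm)

lemma hausdorff_dist_translate:
  fixes x :: "'a::real_normed_vector"
  shows "hausdorff_dist (translate K x) (translate L x) = hausdorff_dist K L"
proof -
  have "(SUP y\<in>translate A x. infdist y (translate B x)) = (SUP y\<in>A. infdist y B)" for A B
    by (simp add: translate_def image_comp o_def infdist_translate[unfolded translate_def])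
  then show ?thesis
    by (simp add: hausdorff_dist_def)
qed

lemma hausdorff_dist_singletons:
  fixes a b :: "'a::metric_space"
  shows "hausdorff_dist {a} {b} = dist a b"
  by (simp add: hausdorff_dist_def dist_commute)

lemma singleton_in_convex_bodies: "{a} \<in> convex_bodies"
  by (simp add: convex_bodies_def)

lemma translate_in_convex_bodies:
  assumes "K \<in> convex_bodies"
  shows "translate K x \<in> convex_bodies"
proof -
  have "translate K x = (+) x ` K"
    by (simp add: translate_def add.commute)
  with assms show ?thesis
    by (auto simp: convex_bodies_def intro: compact_translation convex_translation)
qed

lemma dist_to_empty_infinite_if_translation_invariant:
  fixes d :: "'a::euclidean_space set \<Rightarrow> 'a set \<Rightarrow> ennreal"
  assumes d: "ext_metric_on (insert {} convex_bodies) d"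
    and hausdorff: "\<forall>K\<in>convex_bodies. \<forall>L\<in>convex_bodies. d K L = ennreal (hausdorff_dist K L)"
    and invariant: "\<forall>K\<in>insert {} convex_bodies. \<forall>L\<in>insert {} convex_bodies. \<forall>x.
              d (translate K x) (translate L x) = d K L"
    and K: "K \<in> convex_bodies"
  shows "d K {} = \<infinity>"
proof -
  let ?points = "{{y} | y :: 'a. True}"
  have points_dist: "d {a} {b} = ennreal (dist a b)" for a b :: 'a
    using hausdorff singleton_in_convex_bodies[of a] singleton_in_convex_bodies[of b]
    by (simp add: hausdorff_dist_singletons)
  have "d {y} {} = d {0} {}" for y :: 'a
  proof -
    have "d {y} {} = d (translate {0} y) (translate {} y)"
      by simp
    also have "\<dots> = d {0} {}"
      using invariant singleton_in_convex_bodies[of 0] by blast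
    finally show ?thesis .
  qed
  moreover have "\<exists>a\<in>?points. \<exists>b\<in>?points. ennreal r < d a b" for r
  proof -
    obtain y :: 'a where "norm y = \<bar>r\<bar> + 1"
      using vector_choose_size[of "\<bar>r\<bar> + 1"] by auto
    then have "ennreal r < ennreal (dist 0 y)"
      by (intro ennreal_lessI) auto
    then have "ennreal r < d {0} {y}"
      by (simp only: points_dist)
    then show ?thesis by blast
  qed
  ultimately have "d {0} {} = \<infinity>"
    by (intro ext_metric_on_equidistant_unbounded[OF d, of "{}" ?points])
      (auto simp: singleton_in_convex_bodies)
  moreover have "d {0} K \<noteq> \<infinity>"
    using hausdorff K singleton_in_convex_bodies[of 0] by auto
  ultimately show ?thesis
    using ext_metric_on_infinite_dist_transfer[OF d] K singleton_in_convex_bodies by blast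
qed

lemma translation_invariant_if_dist_to_empty_infinite:
  fixes d :: "'a::euclidean_space set \<Rightarrow> 'a set \<Rightarrow> ennreal"
  assumes hausdorff: "\<forall>K\<in>convex_bodies. \<forall>L\<in>convex_bodies. d K L = ennreal (hausdorff_dist K L)"
    and empty: "d {} {} = 0" "\<forall>K\<in>convex_bodies. d K {} = \<infinity> \<and> d {} K = \<infinity>"
    and K: "K \<in> insert {} convex_bodies" and L: "L \<in> insert {} convex_bodies"
  shows "d (translate K x) (translate L x) = d K L"
  using K L hausdorff empty translate_in_convex_bodies[of K x] translate_in_convex_bodies[of L x]
  by (auto simp: hausdorff_dist_translate)

theorem lemma5p1:
  fixes d :: "'a::euclidean_space set \<Rightarrow> 'a set \<Rightarrow> ennreal"
  assumes "ext_metric_on (insert {} convex_bodies) d"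
  shows "((\<forall>K\<in>convex_bodies. \<forall>L\<in>convex_bodies. d K L = ennreal (hausdorff_dist K L)) \<and>
          (\<forall>K\<in>insert {} convex_bodies. \<forall>L\<in>insert {} convex_bodies. \<forall>x.
              d (translate K x) (translate L x) = d K L))
     \<longleftrightarrow>
         ((\<forall>K\<in>convex_bodies. \<forall>L\<in>convex_bodies. d K L = ennreal (hausdorff_dist K L)) \<and>
          d {} {} = 0 \<and>
          (\<forall>K\<in>convex_bodies. d K {} = \<infinity> \<and> d {} K = \<infinity>))"
proof -
  have "d {} {} = 0"
    using ext_metric_on_zero_iff[OF assms] by blast
  moreover have "d {} K = d K {}" if "K \<in> convex_bodies" for K
    using ext_metric_on_sym[OF assms] that by blast
  moreover note dist_to_empty_infinite_if_translation_invariant[OF assms]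
    translation_invariant_if_dist_to_empty_infinite[of d]
  ultimately show ?thesis
    by (intro iffI conjI ballI allI) auto
qed

end
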